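(* Let $g\in\mathrm{Sp}(1,1)$. Then every element of $g\,\mathrm{SU}(1,1)\,g^{-1}$ has real trace if and only if $g\in\mathrm{Sp}(1)\cdot\mathrm{SU}(1,1)$, i.e. $g=(hI_2)u$ for some unit quaternion $h$ and some $u\in\mathrm{SU}(1,1)$.
   Context: $\mathbb H$ denotes the quaternions. $\mathrm{Sp}(1,1)=\{A\in\mathrm{GL}(2,\mathbb H): A^*I_{1,1}A=I_{1,1}\}$, with $A^*$ the conjugate transpose and $I_{1,1}=\mathrm{diag}(1,-1)$. $\mathrm{SU}(1,1)\subset\mathrm{Sp}(1,1)$ is the subgroup of complex matrices of determinant $1$ preserving $I_{1,1}$. $\mathrm{Sp}(1)$ is the group of unit quaternions, and $h\in\mathrm{Sp}(1)$ is identified with the scalar matrix $hI_2\in\mathrm{Sp}(1,1)$. The trace of a quaternionic matrix is the sum of its diagonal entries. *)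

theory Defs
  imports Complex_Main
begin

datatype quat = Quat (qre: real) (qi: real) (qj: real) (qk: real)

definition qadd :: "quat \<Rightarrow> quat \<Rightarrow> quat" where
  "qadd p q = Quat (qre p + qre q) (qi p + qi q) (qj p + qj q) (qk p + qk q)"

text \<open>Hamilton product (i^2 = j^2 = k^2 = ijk = -1).\<close>
definition qmult :: "quat \<Rightarrow> quat \<Rightarrow> quat" where
  "qmult p q = Quat
     (qre p * qre q - qi p * qi q - qj p * qj q - qk p * qk q)
     (qre p * qi q + qi p * qre q + qj p * qk q - qk p * qj q)
     (qre p * qj q - qi p * qk q + qj p * qre q + qk p * qi q)
     (qre p * qk q + qi p * qj q - qj p * qi q + qk p * qre q)"

definition qcnj :: "quat \<Rightarrow> quat" where
  "qcnj q = Quat (qre q) (- qi q) (- qj q) (- qk q)"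

definition qzero :: quat where "qzero = Quat 0 0 0 0"
definition qone :: quat where "qone = Quat 1 0 0 0"
definition qneg :: "quat \<Rightarrow> quat" where
  "qneg q = Quat (- qre q) (- qi q) (- qj q) (- qk q)"

definition quat_of_complex :: "complex \<Rightarrow> quat" where
  "quat_of_complex z = Quat (Re z) (Im z) 0 0"

definition quat_is_real :: "quat \<Rightarrow> bool" where
  "quat_is_real q \<longleftrightarrow> qi q = 0 \<and> qj q = 0 \<and> qk q = 0"

definition Sp1 :: "quat set" where
  "Sp1 = {q. (qre q)\<^sup>2 + (qi q)\<^sup>2 + (qj q)\<^sup>2 + (qk q)\<^sup>2 = 1}"

datatype qmat = QM (m11: quat) (m12: quat) (m21: quat) (m22: quat)

definition qmmult :: "qmat \<Rightarrow> qmat \<Rightarrow> qmat" where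
  "qmmult A B = QM
     (qadd (qmult (m11 A) (m11 B)) (qmult (m12 A) (m21 B)))
     (qadd (qmult (m11 A) (m12 B)) (qmult (m12 A) (m22 B)))
     (qadd (qmult (m21 A) (m11 B)) (qmult (m22 A) (m21 B)))
     (qadd (qmult (m21 A) (m12 B)) (qmult (m22 A) (m22 B)))"

definition qmstar :: "qmat \<Rightarrow> qmat" where
  "qmstar A = QM (qcnj (m11 A)) (qcnj (m21 A)) (qcnj (m12 A)) (qcnj (m22 A))"

definition qmid :: qmat where "qmid = QM qone qzero qzero qone"

definition I11 :: qmat where "I11 = QM qone qzero qzero (qneg qone)"

definition qscalar :: "quat \<Rightarrow> qmat" where "qscalar h = QM h qzero qzero h"

definition qmtrace :: "qmat \<Rightarrow> quat" where "qmtrace A = qadd (m11 A) (m22 A)"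

definition qminv :: "qmat \<Rightarrow> qmat" where
  "qminv A = (THE B. qmmult A B = qmid \<and> qmmult B A = qmid)"

definition invertible_qmat :: "qmat \<Rightarrow> bool" where
  "invertible_qmat A \<longleftrightarrow> (\<exists>B. qmmult A B = qmid \<and> qmmult B A = qmid)"

definition Sp11 :: "qmat set" where
  "Sp11 = {A. invertible_qmat A \<and> qmmult (qmmult (qmstar A) I11) A = I11}"

definition SU11 :: "qmat set" where
  "SU11 = {A. \<exists>a b c d :: complex.
      A = QM (quat_of_complex a) (quat_of_complex b) (quat_of_complex c) (quat_of_complex d)
      \<and> a * d - b * c = 1
      \<and> qmmult (qmmult (qmstar A) I11) A = I11}"

end

theory Submission
  imports Defs
begin

(* Both sides are invariant under left multiplication by scalar unit quaternions. For the
   reverse implication, conjugation by an element of SU(1,1) maps SU(1,1) into the complex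
   matrices [[a, b], [cnj b, cnj a]], whose trace 2 Re a is real.
   For the direct implication write g = [[p, q], [r, s]] and rotate p to a positive real t.
   Testing the trace condition on three elements of SU(1,1) that differ from real multiples of
   the identity by a basis of su(1,1) shows that cnj r commutes with s and with s i, so r is
   complex; then s is complex, directly if r is not real and by the diag(i, -i) test if it is,
   and so is q = cnj r s / t. Finally a complex element of Sp(1,1) with positive corner t is
   w u with w a square root of s / t and u in SU(1,1). *)

section \<open>Quaternions\<close>

lemma quat_eq_iff: "p = q \<longleftrightarrow> qre p = qre q \<and> qi p = qi q \<and> qj p = qj q \<and> qk p = qk q"
  by (cases p; cases q) auto

instantiation quat :: real_algebra_1
begin
definition "zero_quat = qzero"
definition "one_quat = qone"
definition "plus_quat = qadd"
definition "times_quat = qmult"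
definition "uminus_quat = qneg"
definition "minus_quat p q = qadd p (qneg q)"
definition "scaleR_quat a q = Quat (a * qre q) (a * qi q) (a * qj q) (a * qk q)"
instance
  by standard (auto simp: quat_eq_iff zero_quat_def one_quat_def plus_quat_def times_quat_def
      uminus_quat_def minus_quat_def scaleR_quat_def qzero_def qone_def qadd_def qmult_def qneg_def
      algebra_simps)
end

lemma quat_coords [simp]:
  "qre 0 = 0" "qi 0 = 0" "qj 0 = 0" "qk 0 = 0"
  "qre 1 = 1" "qi 1 = 0" "qj 1 = 0" "qk 1 = 0"
  "qre (p + q) = qre p + qre q" "qi (p + q) = qi p + qi q"
  "qj (p + q) = qj p + qj q" "qk (p + q) = qk p + qk q"
  "qre (p - q) = qre p - qre q" "qi (p - q) = qi p - qi q"
  "qj (p - q) = qj p - qj q" "qk (p - q) = qk p - qk q"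
  "qre (- q) = - qre q" "qi (- q) = - qi q" "qj (- q) = - qj q" "qk (- q) = - qk q"
  "qre (p * q) = qre p * qre q - qi p * qi q - qj p * qj q - qk p * qk q"
  "qi (p * q) = qre p * qi q + qi p * qre q + qj p * qk q - qk p * qj q"
  "qj (p * q) = qre p * qj q - qi p * qk q + qj p * qre q + qk p * qi q"
  "qk (p * q) = qre p * qk q + qi p * qj q - qj p * qi q + qk p * qre q"
  "qre (of_real t) = t" "qi (of_real t) = 0" "qj (of_real t) = 0" "qk (of_real t) = 0"
  "qre (qcnj q) = qre q" "qi (qcnj q) = - qi q" "qj (qcnj q) = - qj q" "qk (qcnj q) = - qk q"
  "qre (quat_of_complex z) = Re z" "qi (quat_of_complex z) = Im z"
  "qj (quat_of_complex z) = 0" "qk (quat_of_complex z) = 0"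
  by (simp_all add: zero_quat_def one_quat_def plus_quat_def times_quat_def uminus_quat_def
      minus_quat_def of_real_def scaleR_quat_def qzero_def qone_def qadd_def qmult_def qneg_def
      qcnj_def quat_of_complex_def)

lemma quat_ops_eq: "qadd p q = p + q" "qmult p q = p * q" "qneg p = - p" "qzero = 0" "qone = 1"
  by (simp_all add: zero_quat_def one_quat_def plus_quat_def times_quat_def uminus_quat_def)

definition qnorm2 :: "quat \<Rightarrow> real" where
  "qnorm2 q = (qre q)\<^sup>2 + (qi q)\<^sup>2 + (qj q)\<^sup>2 + (qk q)\<^sup>2"

lemma Sp1_iff: "h \<in> Sp1 \<longleftrightarrow> qnorm2 h = 1"
  by (simp add: Sp1_def qnorm2_def)

lemma qnorm2_nonneg: "qnorm2 q \<ge> 0"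
  by (simp add: qnorm2_def)

lemma qnorm2_eq_0_iff: "qnorm2 q = 0 \<longleftrightarrow> q = 0"
  by (simp add: qnorm2_def quat_eq_iff add_nonneg_eq_0_iff)

lemma qnorm2_mult: "qnorm2 (p * q) = qnorm2 p * qnorm2 q"
  by (simp add: qnorm2_def algebra_simps power2_eq_square)

lemma qnorm2_qcnj: "qnorm2 (qcnj q) = qnorm2 q"
  by (simp add: qnorm2_def)

lemma qnorm2_of_real: "qnorm2 (of_real t) = t\<^sup>2"
  by (simp add: qnorm2_def)

lemma qnorm2_quat_of_complex: "qnorm2 (quat_of_complex z) = (cmod z)\<^sup>2"
  by (simp add: qnorm2_def cmod_def)

instance quat :: ring_1_no_zero_divisors
proof
  fix a b :: quat
  assume "a \<noteq> 0" "b \<noteq> 0"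
  then show "a * b \<noteq> 0"
    by (simp flip: qnorm2_eq_0_iff add: qnorm2_mult)
qed

lemma mult_qcnj: "q * qcnj q = of_real (qnorm2 q)"
  and qcnj_mult_self: "qcnj q * q = of_real (qnorm2 q)"
  by (simp_all add: quat_eq_iff qnorm2_def algebra_simps power2_eq_square)

lemma qcnj_mult: "qcnj (p * q) = qcnj q * qcnj p"
  by (simp add: quat_eq_iff algebra_simps)

lemma qcnj_qcnj [simp]: "qcnj (qcnj q) = q"
  and qcnj_one [simp]: "qcnj 1 = 1"
  and qcnj_of_real [simp]: "qcnj (of_real t) = of_real t"
  and qcnj_scaleR: "qcnj (a *\<^sub>R q) = a *\<^sub>R qcnj q"
  by (simp_all add: quat_eq_iff scaleR_conv_of_real)

lemma of_real_quat_commute: "of_real t * q = q * (of_real t :: quat)"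
  by (simp add: quat_eq_iff)

lemma quat_is_real_iff: "quat_is_real q \<longleftrightarrow> q = of_real (qre q)"
  by (auto simp: quat_is_real_def quat_eq_iff)

lemma quat_is_real_of_real: "quat_is_real (of_real t)"
  by (simp add: quat_is_real_def)

lemma quat_is_real_unit_conj:
  assumes "quat_is_real x"
  shows "quat_is_real (h * x * qcnj h)"
proof -
  obtain c where "x = of_real c"
    using assms quat_is_real_iff by blast
  then have "h * x * qcnj h = of_real c * (h * qcnj h)"
    by (simp add: of_real_quat_commute mult.assoc)
  also have "\<dots> = of_real (c * qnorm2 h)"
    by (simp add: mult_qcnj)
  finally show ?thesis by (simp only: quat_is_real_of_real)
qed

lemma commutator_real_imp_commute: "quat_is_real (a * b - b * a) \<Longrightarrow> a * b = b * a"
  by (simp add: quat_is_real_def quat_eq_iff algebra_simps)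

lemma conj_fixed_imp_commute:
  assumes "s * x * qcnj s = of_real (qnorm2 s) * x" "s \<noteq> 0"
  shows "s * x = x * s"
proof -
  have "of_real (qnorm2 s) * (s * x) = s * x * (qcnj s * s)"
    by (simp add: qcnj_mult_self of_real_quat_commute)
  also have "\<dots> = of_real (qnorm2 s) * (x * s)"
    using assms(1) by (simp flip: mult.assoc)
  finally show ?thesis
    using assms(2) qnorm2_eq_0_iff by (simp add: mult_left_cancel)
qed

lemma quat_of_complex_hom:
  "quat_of_complex (a * b) = quat_of_complex a * quat_of_complex b"
  "quat_of_complex (cnj a) = qcnj (quat_of_complex a)"
  "quat_of_complex (of_real t) = of_real t"
  by (simp_all add: quat_eq_iff)

lemma commute_i_imp_complex:
  "w * quat_of_complex \<i> = quat_of_complex \<i> * w \<Longrightarrow> w \<in> range quat_of_complex"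
  by (rule range_eqI[of _ _ "Complex (qre w) (qi w)"]) (simp add: quat_eq_iff)

lemma commute_complex_imp_complex:
  assumes "w * quat_of_complex z = quat_of_complex z * w" "Im z \<noteq> 0"
  shows "w \<in> range quat_of_complex"
  using assms by (intro commute_i_imp_complex) (simp add: quat_eq_iff)

section \<open>Quaternionic matrices and Sp(1,1)\<close>

lemma qmmult_QM:
  "qmmult (QM a b c d) (QM a' b' c' d') =
     QM (a * a' + b * c') (a * b' + b * d') (c * a' + d * c') (c * b' + d * d')"
  by (simp add: qmmult_def quat_ops_eq)

lemma qmmult_assoc: "qmmult (qmmult A B) C = qmmult A (qmmult B C)"
  by (cases A; cases B; cases C)
    (simp add: qmmult_QM distrib_left distrib_right mult.assoc add_ac)

lemma qmmult_qmid_left [simp]: "qmmult qmid A = A"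
  and qmmult_qmid_right [simp]: "qmmult A qmid = A"
  by (cases A; simp add: qmid_def qmmult_QM quat_ops_eq)+

lemma qminv_eqI:
  assumes "qmmult A B = qmid" "qmmult B A = qmid"
  shows "qminv A = B"
  unfolding qminv_def
proof (rule the_equality)
  show "qmmult A B = qmid \<and> qmmult B A = qmid" using assms ..
  show "B' = B" if "qmmult A B' = qmid \<and> qmmult B' A = qmid" for B'
  proof -
    have "B' = qmmult (qmmult B' A) B"
      using assms(1) by (simp add: qmmult_assoc)
    then show ?thesis using that by simp
  qed
qed

definition I11_adjoint :: "qmat \<Rightarrow> qmat" where
  "I11_adjoint A = qmmult (qmmult I11 (qmstar A)) I11"

lemma I11_adjoint_QM:
  "I11_adjoint (QM p q r s) = QM (qcnj p) (- qcnj r) (- qcnj q) (qcnj s)"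
  by (simp add: I11_adjoint_def I11_def qmstar_def qmmult_QM quat_ops_eq)

lemma Sp11_inverse:
  assumes "g \<in> Sp11"
  shows "qmmult (I11_adjoint g) g = qmid" "qmmult g (I11_adjoint g) = qmid"
    and "qminv g = I11_adjoint g"
proof -
  have I11_square: "qmmult I11 I11 = qmid"
    by (simp add: I11_def qmid_def qmmult_QM quat_ops_eq)
  have "qmmult (qmstar g) (qmmult I11 g) = I11" "invertible_qmat g"
    using assms by (simp_all add: Sp11_def flip: qmmult_assoc)
  then show left: "qmmult (I11_adjoint g) g = qmid"
    by (simp add: I11_adjoint_def qmmult_assoc I11_square)
  from \<open>invertible_qmat g\<close> obtain B where "qmmult g B = qmid"
    by (auto simp: invertible_qmat_def)
  then have "B = I11_adjoint g"
  proof -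
    have "B = qmmult (qmmult (I11_adjoint g) g) B" using left by simp
    then show ?thesis using \<open>qmmult g B = qmid\<close> by (simp add: qmmult_assoc)
  qed
  with \<open>qmmult g B = qmid\<close> show right: "qmmult g (I11_adjoint g) = qmid" by simp
  show "qminv g = I11_adjoint g" using qminv_eqI[OF right left] .
qed

lemma Sp11_relations:
  assumes "QM p q r s \<in> Sp11"
  shows "qcnj p * p - qcnj r * r = 1" "qcnj p * q = qcnj r * s"
    and "p * qcnj p - q * qcnj q = 1" "s * qcnj s - r * qcnj r = 1"
proof -
  have "qmmult (qmmult (qmstar (QM p q r s)) I11) (QM p q r s) = I11"
    using assms by (simp add: Sp11_def)
  then show "qcnj p * p - qcnj r * r = 1" "qcnj p * q = qcnj r * s"
    by (simp_all add: qmstar_def I11_def qmmult_QM quat_ops_eq)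
  show "p * qcnj p - q * qcnj q = 1" "s * qcnj s - r * qcnj r = 1"
    using Sp11_inverse(2)[OF assms]
    by (simp_all add: I11_adjoint_QM qmid_def qmmult_QM quat_ops_eq)
qed

lemma qmmult_qscalar_QM: "qmmult (qscalar h) (QM a b c d) = QM (h * a) (h * b) (h * c) (h * d)"
  by (simp add: qscalar_def qmmult_QM quat_ops_eq)

lemma qmmult_qscalar_qscalar:
  "qmmult (qscalar h) (qmmult (qscalar k) A) = qmmult (qscalar (h * k)) A"
  by (cases A) (simp add: qmmult_qscalar_QM mult.assoc)

lemma qmtrace_qscalar_conj:
  "qmtrace (qmmult (qmmult (qscalar h) A) (qscalar k)) = h * qmtrace A * k"
  by (cases A) (simp add: qmmult_qscalar_QM qscalar_def qmmult_QM qmtrace_def quat_ops_eq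
      algebra_simps)

lemma qscalar_unit_inverse:
  assumes "h \<in> Sp1"
  shows "qmmult (qscalar h) (qscalar (qcnj h)) = qmid"
    and "qmmult (qscalar (qcnj h)) (qscalar h) = qmid"
  using assms
  by (simp_all add: Sp1_iff qscalar_def qmid_def qmmult_QM quat_ops_eq mult_qcnj qcnj_mult_self)

lemma Sp11_unit_scalar:
  assumes "h \<in> Sp1" "g \<in> Sp11"
  shows "qmmult (qscalar h) g \<in> Sp11"
    and "qminv (qmmult (qscalar h) g) = qmmult (I11_adjoint g) (qscalar (qcnj h))"
proof -
  let ?g = "qmmult (qscalar h) g" and ?B = "qmmult (I11_adjoint g) (qscalar (qcnj h))"
  have "qmmult ?g ?B = qmid" "qmmult ?B ?g = qmid"
    using Sp11_inverse(1,2)[OF assms(2)] qscalar_unit_inverse[OF assms(1)]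
    by (simp_all add: qmmult_assoc flip: qmmult_assoc[of g] qmmult_assoc[of "qscalar (qcnj h)"])
  then show "qminv ?g = ?B" by (rule qminv_eqI)
  have "qmmult (qmmult (qmstar ?g) I11) ?g = qmmult (qmmult (qmstar g) I11) g"
  proof -
    have star: "qmstar ?g = qmmult (qmstar g) (qscalar (qcnj h))"
      by (cases g) (simp add: qmmult_qscalar_QM qmstar_def qscalar_def qmmult_QM quat_ops_eq
          qcnj_mult)
    have I11_commute:
      "qmmult (qscalar (qcnj h)) (qmmult I11 X) = qmmult I11 (qmmult (qscalar (qcnj h)) X)" for X
      by (cases X) (simp add: qscalar_def I11_def qmmult_QM quat_ops_eq)
    have "qscalar (qcnj h * h) = qmid"
      using assms(1) by (simp add: Sp1_iff qcnj_mult_self qscalar_def qmid_def quat_ops_eq)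
    then show ?thesis
      by (simp add: star qmmult_assoc I11_commute qmmult_qscalar_qscalar)
  qed
  moreover have "invertible_qmat ?g"
    using \<open>qmmult ?g ?B = qmid\<close> \<open>qmmult ?B ?g = qmid\<close> by (auto simp: invertible_qmat_def)
  ultimately show "?g \<in> Sp11"
    using assms(2) by (simp add: Sp11_def)
qed

section \<open>SU(1,1)\<close>

definition su11_mat :: "complex \<Rightarrow> complex \<Rightarrow> qmat" where
  "su11_mat a b = QM (quat_of_complex a) (quat_of_complex b)
     (quat_of_complex (cnj b)) (quat_of_complex (cnj a))"

lemma su11_mat_mult:
  "qmmult (su11_mat a b) (su11_mat c d) = su11_mat (a * c + b * cnj d) (a * d + b * cnj c)"
  by (simp add: su11_mat_def qmmult_QM quat_eq_iff algebra_simps)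

lemma su11_mat_1_0: "su11_mat 1 0 = qmid"
  by (simp add: su11_mat_def qmid_def quat_ops_eq quat_eq_iff)

lemma su11_mat_inverse:
  assumes "cnj a * a - cnj b * b = 1"
  shows "qmmult (su11_mat a b) (su11_mat (cnj a) (- b)) = qmid"
    and "qmmult (su11_mat (cnj a) (- b)) (su11_mat a b) = qmid"
  using assms by (simp_all add: su11_mat_mult su11_mat_1_0 algebra_simps)

lemma quat_is_real_qmtrace_su11_mat: "quat_is_real (qmtrace (su11_mat a b))"
  by (simp add: su11_mat_def qmtrace_def quat_ops_eq quat_is_real_def)

lemma I11_form_complex_iff:
  fixes a b c d :: complex
  defines "A \<equiv> QM (quat_of_complex a) (quat_of_complex b) (quat_of_complex c) (quat_of_complex d)"
  shows "qmmult (qmmult (qmstar A) I11) A = I11 \<longleftrightarrow>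
    cnj a * a - cnj c * c = 1 \<and> cnj a * b = cnj c * d \<and> cnj b * b - cnj d * d = -1"
  by (simp add: A_def qmstar_def I11_def qmmult_QM quat_ops_eq quat_eq_iff complex_eq_iff
      algebra_simps) argo

lemma U11_det_1_imp_su11_entries:
  fixes a b c d :: complex
  assumes "cnj a * a - cnj c * c = 1" "cnj a * b = cnj c * d" "a * d - b * c = 1"
  shows "d = cnj a" "c = cnj b"
proof -
  have "cnj a = cnj a * (a * d - b * c)" using assms(3) by simp
  also have "\<dots> = d * (cnj a * a) - c * (cnj a * b)"
    by (simp add: algebra_simps)
  also have "\<dots> = d * (cnj a * a) - c * (cnj c * d)"
    by (simp only: assms(2))
  also have "\<dots> = d * (cnj a * a - cnj c * c)"
    by (simp add: algebra_simps)
  also have "\<dots> = d"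
    by (simp add: assms(1))
  finally show "d = cnj a" ..
  have "a \<noteq> 0"
    using assms(1) by (auto simp: complex_eq_iff) (smt (verit) zero_le_square)
  have "a * (cnj b - c) = cnj (cnj a * b - cnj c * d)"
    by (simp add: \<open>d = cnj a\<close> algebra_simps)
  with assms(2) \<open>a \<noteq> 0\<close> show "c = cnj b" by simp
qed

lemma SU11_iff: "u \<in> SU11 \<longleftrightarrow> (\<exists>a b. u = su11_mat a b \<and> cnj a * a - cnj b * b = 1)"
proof
  assume "u \<in> SU11"
  then obtain a b c d where u: "u = QM (quat_of_complex a) (quat_of_complex b)
      (quat_of_complex c) (quat_of_complex d)" and det: "a * d - b * c = 1"
    and "qmmult (qmmult (qmstar u) I11) u = I11"
    unfolding SU11_def by blast
  then have "cnj a * a - cnj c * c = 1" "cnj a * b = cnj c * d"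
    using I11_form_complex_iff by blast+
  with det have "d = cnj a" "c = cnj b"
    using U11_det_1_imp_su11_entries by blast+
  with u \<open>cnj a * a - cnj c * c = 1\<close> show "\<exists>a b. u = su11_mat a b \<and> cnj a * a - cnj b * b = 1"
    by (intro exI[of _ a] exI[of _ b]) (simp add: su11_mat_def mult.commute)
next
  assume "\<exists>a b. u = su11_mat a b \<and> cnj a * a - cnj b * b = 1"
  then obtain a b where u: "u = su11_mat a b" and ab: "cnj a * a - cnj b * b = 1" by blast
  have "qmmult (qmmult (qmstar u) I11) u = I11"
    unfolding u su11_mat_def I11_form_complex_iff using ab by (simp add: algebra_simps)
  moreover have "a * cnj a - b * cnj b = 1"
    using ab by (simp add: mult.commute)
  ultimately show "u \<in> SU11"
    unfolding SU11_def using u su11_mat_def by blast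
qed

lemma SU11_qminv:
  assumes "cnj a * a - cnj b * b = 1"
  shows "qminv (su11_mat a b) = su11_mat (cnj a) (- b)"
  using su11_mat_inverse[OF assms] by (rule qminv_eqI)

lemma SU11_subset_Sp11: "SU11 \<subseteq> Sp11"
proof
  fix u assume "u \<in> SU11"
  then obtain a b where "u = su11_mat a b" "cnj a * a - cnj b * b = 1"
    by (auto simp: SU11_iff)
  then have "invertible_qmat u"
    using su11_mat_inverse unfolding invertible_qmat_def by blast
  moreover have "qmmult (qmmult (qmstar u) I11) u = I11"
    using \<open>u \<in> SU11\<close> by (auto simp: SU11_def)
  ultimately show "u \<in> Sp11" by (simp add: Sp11_def)
qed

section \<open>Conjugates of SU(1,1) with real traces\<close>

definition SU11_conj_real_trace :: "qmat \<Rightarrow> bool" where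
  "SU11_conj_real_trace g \<longleftrightarrow>
     (\<forall>u \<in> SU11. quat_is_real (qmtrace (qmmult (qmmult g u) (qminv g))))"

lemma SU11_conj_real_trace_SU11:
  assumes "u \<in> SU11"
  shows "SU11_conj_real_trace u"
  unfolding SU11_conj_real_trace_def
proof
  fix v assume "v \<in> SU11"
  obtain a b c d where "u = su11_mat a b" "cnj a * a - cnj b * b = 1" "v = su11_mat c d"
    using assms \<open>v \<in> SU11\<close> by (auto simp: SU11_iff)
  then show "quat_is_real (qmtrace (qmmult (qmmult u v) (qminv u)))"
    by (simp add: SU11_qminv su11_mat_mult quat_is_real_qmtrace_su11_mat)
qed

lemma SU11_conj_real_trace_unit_scalar:
  assumes "h \<in> Sp1" "g \<in> Sp11" "SU11_conj_real_trace g"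
  shows "SU11_conj_real_trace (qmmult (qscalar h) g)"
  unfolding SU11_conj_real_trace_def
proof
  fix u assume "u \<in> SU11"
  let ?X = "qmmult (qmmult g u) (qminv g)"
  have "qmmult (qmmult (qmmult (qscalar h) g) u) (qminv (qmmult (qscalar h) g))
      = qmmult (qmmult (qscalar h) ?X) (qscalar (qcnj h))"
    by (simp add: Sp11_unit_scalar(2)[OF assms(1,2)] Sp11_inverse(3)[OF assms(2)] qmmult_assoc)
  moreover have "quat_is_real (qmtrace ?X)"
    using assms(3) \<open>u \<in> SU11\<close> by (simp add: SU11_conj_real_trace_def)
  ultimately show "quat_is_real (qmtrace (qmmult (qmmult (qmmult (qscalar h) g) u)
      (qminv (qmmult (qscalar h) g))))"
    by (simp add: qmtrace_qscalar_conj quat_is_real_unit_conj)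
qed

text \<open>The three test elements are real multiples of the identity plus multiples of the basis
  [[0, 1], [1, 0]], [[0, i], [-i, 0]], diag(i, -i) of su(1,1).\<close>

lemma SU11_conj_real_trace_tests:
  fixes p q r s :: quat
  defines "g \<equiv> QM p q r s" and "i \<equiv> quat_of_complex \<i>"
  assumes "g \<in> Sp11" "SU11_conj_real_trace g"
  shows "quat_is_real (q * qcnj p - s * qcnj r)"
    and "quat_is_real (q * i * qcnj p - s * i * qcnj r)"
    and "p * i * qcnj p + q * i * qcnj q - r * i * qcnj r - s * i * qcnj s = 0"
proof -
  have test: "quat_is_real (qmtrace (qmmult (qmmult g (su11_mat a b)) (I11_adjoint g)))"
    if "cnj a * a - cnj b * b = 1" for a b
    using assms(3,4) that
    by (auto simp: SU11_conj_real_trace_def SU11_iff Sp11_inverse(3))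
  note trace_simps = g_def i_def su11_mat_def I11_adjoint_QM qmmult_QM qmtrace_def quat_ops_eq
    quat_is_real_def
  have "quat_is_real (qmtrace (qmmult (qmmult g (su11_mat (5/4) (3/4))) (I11_adjoint g)))"
    by (rule test) simp
  then show "quat_is_real (q * qcnj p - s * qcnj r)"
    by (simp add: trace_simps algebra_simps)
  have "quat_is_real (qmtrace (qmmult (qmmult g (su11_mat (5/4) (3/4 * \<i>))) (I11_adjoint g)))"
    by (rule test) simp
  then show "quat_is_real (q * i * qcnj p - s * i * qcnj r)"
    by (simp add: trace_simps algebra_simps)
  have "quat_is_real (qmtrace (qmmult (qmmult g (su11_mat \<i> 0)) (I11_adjoint g)))"
    by (rule test) simp
  then show "p * i * qcnj p + q * i * qcnj q - r * i * qcnj r - s * i * qcnj s = 0"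
    by (simp add: trace_simps quat_eq_iff algebra_simps)
qed

section \<open>Sp(1,1) matrices with a positive real corner\<close>

lemma Sp11_positive_corner_upper_right:
  assumes "QM (of_real t) q r s \<in> Sp11" "t \<noteq> 0"
  shows "q = of_real (1 / t) * (qcnj r * s)"
proof -
  have "q = of_real (1 / t) * (of_real t * q)"
    using assms(2) by (simp flip: mult.assoc of_real_mult)
  then show ?thesis
    using Sp11_relations(2)[OF assms(1)] by simp
qed

lemma Sp11_positive_corner_lower_left:
  fixes t :: real and q r s :: quat
  defines "g \<equiv> QM (of_real t) q r s"
  assumes "g \<in> Sp11" "t > 0" "SU11_conj_real_trace g"
  shows "qcnj r \<in> range quat_of_complex" "qcnj r * s = s * qcnj r"
proof -
  define i where "i = quat_of_complex \<i>"
  note tests = SU11_conj_real_trace_tests[OF assms(2,4)[unfolded g_def], folded i_def]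
  have qt: "q * of_real t = qcnj r * s"
    using Sp11_relations(2)[OF assms(2)[unfolded g_def]] by (simp add: of_real_quat_commute)
  then show comm_s: "qcnj r * s = s * qcnj r"
    using tests(1) by (intro commutator_real_imp_commute) simp
  have "q * i * of_real t = qcnj r * (s * i)"
    by (metis qt mult.assoc of_real_quat_commute)
  then have comm_si: "qcnj r * (s * i) = s * i * qcnj r"
    using tests(2) by (intro commutator_real_imp_commute) simp
  have "qnorm2 s = 1 + qnorm2 r"
    using arg_cong[OF Sp11_relations(4)[OF assms(2)[unfolded g_def]], of qre]
    by (simp add: mult_qcnj)
  then have "s \<noteq> 0"
    using qnorm2_nonneg[of r] by (auto simp: qnorm2_eq_0_iff[symmetric])
  moreover have "s * (qcnj r * i) = s * (i * qcnj r)"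
    using comm_s comm_si by (metis mult.assoc)
  ultimately have "qcnj r * i = i * qcnj r"
    by (simp add: mult_left_cancel)
  then show "qcnj r \<in> range quat_of_complex"
    unfolding i_def by (rule commute_i_imp_complex)
qed

lemma Sp11_positive_corner_real_lower_left:
  fixes t c :: real and q s :: quat
  defines "g \<equiv> QM (of_real t) q (of_real c) s"
  assumes "g \<in> Sp11" "t > 0" "SU11_conj_real_trace g"
  shows "s \<in> range quat_of_complex"
proof -
  define i where "i = quat_of_complex \<i>"
  define W where "W = s * i * qcnj s"
  note rel = Sp11_relations[OF assms(2)[unfolded g_def]]
  have tc: "t * t - c * c = 1"
    using arg_cong[OF rel(1), of qre] by simp
  have norm_s: "qnorm2 s = t * t"
    using arg_cong[OF rel(4), of qre] tc by (simp add: mult_qcnj)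
  have "q = (c / t) *\<^sub>R s"
    using Sp11_positive_corner_upper_right[OF assms(2)[unfolded g_def]] \<open>t > 0\<close>
    by (simp add: scaleR_conv_of_real flip: mult.assoc of_real_mult)
  then have "(t * t) *\<^sub>R i + (c / t * (c / t)) *\<^sub>R W - (c * c) *\<^sub>R i - W = 0"
    using SU11_conj_real_trace_tests(3)[OF assms(2,4)[unfolded g_def], folded i_def]
    by (simp add: W_def of_real_def qcnj_scaleR mult.assoc)
  then have "(1 - c / t * (c / t)) *\<^sub>R W = (t * t - c * c) *\<^sub>R i"
    by (simp add: algebra_simps scaleR_diff_left)
  then have "(1 / (t * t)) *\<^sub>R W = i"
    using tc \<open>t > 0\<close> by (simp add: field_simps)
  then have "W = (t * t) *\<^sub>R i"
    using \<open>t > 0\<close> by auto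
  then have "s * i * qcnj s = of_real (qnorm2 s) * i"
    by (simp add: W_def norm_s scaleR_conv_of_real)
  moreover have "s \<noteq> 0"
    using norm_s \<open>t > 0\<close> qnorm2_eq_0_iff by force
  ultimately have "s * i = i * s"
    by (rule conj_fixed_imp_commute)
  then show ?thesis
    unfolding i_def by (rule commute_i_imp_complex)
qed

lemma Sp11_positive_corner_entries_complex:
  fixes t :: real and q r s :: quat
  defines "g \<equiv> QM (of_real t) q r s"
  assumes "g \<in> Sp11" "t > 0" "SU11_conj_real_trace g"
  shows "q \<in> range quat_of_complex \<and> r \<in> range quat_of_complex \<and> s \<in> range quat_of_complex"
proof -
  note lower_left = Sp11_positive_corner_lower_left[OF assms(2-4)[unfolded g_def]]
  obtain z where z: "qcnj r = quat_of_complex z"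
    using lower_left(1) by blast
  then have r: "r = quat_of_complex (cnj z)"
    by (metis qcnj_qcnj quat_of_complex_hom(2))
  have "s \<in> range quat_of_complex"
  proof (cases "Im z = 0")
    case False
    with lower_left(2) z show ?thesis
      using commute_complex_imp_complex by metis
  next
    case True
    then have "r = of_real (Re z)"
      using r by (simp add: quat_eq_iff)
    with assms show ?thesis
      using Sp11_positive_corner_real_lower_left by blast
  qed
  moreover have "q \<in> range quat_of_complex"
    using Sp11_positive_corner_upper_right[OF assms(2)[unfolded g_def]] \<open>t > 0\<close> z calculation
    by (auto simp flip: quat_of_complex_hom)
  ultimately show ?thesis
    using r by blast
qed

lemma Sp11_complex_positive_corner_relations:
  fixes t :: real and b c d :: complex
  assumes "QM (of_real t) (quat_of_complex b) (quat_of_complex c) (quat_of_complex d) \<in> Sp11"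
    and "t > 0"
  shows "cmod d = t" "c = cnj b * (d / t)" "t * t - b * cnj b = 1"
proof -
  note rel = Sp11_relations[OF assms(1)]
  have R1: "t * t - cnj c * c = 1" and R2: "t * b = cnj c * d"
    and R3: "d * cnj d - c * cnj c = 1"
    using rel(1,2,4) by (simp_all add: quat_eq_iff complex_eq_iff algebra_simps)
  show "t * t - b * cnj b = 1"
    using rel(3) by (simp add: quat_eq_iff complex_eq_iff algebra_simps)
  have dd: "cnj d * d = t * t"
    using R1 R3 by (simp add: algebra_simps)
  have "c * (t * t) = c * cnj d * d" by (simp add: dd mult.assoc)
  also have "c * cnj d = t * cnj b"
    using arg_cong[OF R2, of cnj] by simp
  finally show "c = cnj b * (d / t)"
    using \<open>t > 0\<close> by (simp add: field_simps)
  have "complex_of_real ((cmod d)\<^sup>2) = d * cnj d"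
    by (rule complex_norm_square)
  also have "\<dots> = complex_of_real (t\<^sup>2)"
    using dd by (simp add: mult.commute power2_eq_square)
  finally have "(cmod d)\<^sup>2 = t\<^sup>2"
    by (simp only: of_real_eq_iff)
  then show "cmod d = t"
    using \<open>t > 0\<close> by (simp add: power2_eq_iff_nonneg)
qed

lemma Sp11_complex_positive_corner_factor:
  fixes t :: real and b c d :: complex
  defines "g \<equiv> QM (of_real t) (quat_of_complex b) (quat_of_complex c) (quat_of_complex d)"
  assumes "g \<in> Sp11" "t > 0"
  shows "\<exists>h \<in> Sp1. \<exists>u \<in> SU11. g = qmmult (qscalar h) u"
proof -
  note rel = Sp11_complex_positive_corner_relations[OF assms(2)[unfolded g_def] \<open>t > 0\<close>]
  define w where "w = csqrt (d / t)"
  have "cmod w = 1"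
    using rel(1) \<open>t > 0\<close> by (simp add: w_def norm_divide)
  then have unit_w: "cnj w * w = 1" and "w \<noteq> 0"
    using complex_norm_square[of w] by (auto simp: mult.commute)
  then have "cnj w = 1 / w"
    by (simp add: field_simps)
  then have cnj_div_w: "cnj (x / w) = cnj x * w" for x
    by simp
  define u where "u = su11_mat (of_real t / w) (b / w)"
  have "quat_of_complex w \<in> Sp1"
    using \<open>cmod w = 1\<close> by (simp add: Sp1_iff qnorm2_quat_of_complex)
  moreover have "u \<in> SU11"
  proof -
    have "cnj (of_real t / w) * (of_real t / w) - cnj (b / w) * (b / w) = 1"
      using rel(3) unit_w \<open>w \<noteq> 0\<close> by (simp add: cnj_div_w field_simps mult.commute)
    then show ?thesis
      unfolding u_def SU11_iff by blast
  qed
  moreover have "g = qmmult (qscalar (quat_of_complex w)) u"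
  proof -
    have "w * (of_real t / w) = of_real t" "w * (b / w) = b"
      using \<open>w \<noteq> 0\<close> by simp_all
    moreover have "w * cnj (b / w) = cnj b * (w * w)"
      and "w * cnj (of_real t / w) = of_real t * (w * w)"
      by (simp_all only: cnj_div_w complex_cnj_complex_of_real ac_simps)
    then have "w * cnj (b / w) = c" "w * cnj (of_real t / w) = d"
      using \<open>t > 0\<close> by (simp_all add: w_def rel(2) flip: power2_eq_square)
    ultimately show ?thesis
      by (simp add: g_def u_def su11_mat_def qmmult_qscalar_QM
          flip: quat_of_complex_hom(1,3))
  qed
  ultimately show ?thesis by blast
qed

lemma qscalar_unit_cancel:
  assumes "h \<in> Sp1"
  shows "qmmult (qscalar (qcnj h)) (qmmult (qscalar h) A) = A"
  using qscalar_unit_inverse(2)[OF assms] by (simp flip: qmmult_assoc)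

lemma Sp11_unit_scalar_positive_corner:
  assumes "g \<in> Sp11"
  obtains h t q r s where "h \<in> Sp1" "t > 0" "g = qmmult (qscalar h) (QM (of_real t) q r s)"
proof -
  obtain p q r s where g: "g = QM p q r s" by (cases g)
  have "qnorm2 p = 1 + qnorm2 r"
    using arg_cong[OF Sp11_relations(1)[OF assms[unfolded g]], of qre]
    by (simp add: qcnj_mult_self)
  then have "qnorm2 p > 0"
    using qnorm2_nonneg[of r] by simp
  define t where "t = sqrt (qnorm2 p)"
  have "t > 0" "t * t = qnorm2 p"
    using \<open>qnorm2 p > 0\<close> by (simp_all add: t_def)
  define h where "h = of_real (1 / t) * p"
  have "h \<in> Sp1"
    using \<open>qnorm2 p > 0\<close> \<open>t * t = qnorm2 p\<close>
    by (simp add: h_def Sp1_iff qnorm2_mult qnorm2_of_real power2_eq_square)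
  have "qcnj h * p = of_real (1 / t) * (qcnj p * p)"
    by (metis h_def qcnj_mult qcnj_of_real mult.assoc of_real_quat_commute)
  also have "\<dots> = of_real t"
    using \<open>t > 0\<close> by (simp add: qcnj_mult_self flip: of_real_mult \<open>t * t = qnorm2 p\<close>)
  finally have "qmmult (qscalar (qcnj h)) g = QM (of_real t) (qcnj h * q) (qcnj h * r) (qcnj h * s)"
    by (simp add: g qmmult_qscalar_QM)
  then have "g = qmmult (qscalar h) (QM (of_real t) (qcnj h * q) (qcnj h * r) (qcnj h * s))"
    using qscalar_unit_inverse(1)[OF \<open>h \<in> Sp1\<close>] by (metis qmmult_assoc qmmult_qmid_left)
  with \<open>h \<in> Sp1\<close> \<open>t > 0\<close> show ?thesis by (rule that)
qed

lemma SU11_conj_real_trace_imp_factor: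
  assumes "g \<in> Sp11" "SU11_conj_real_trace g"
  shows "\<exists>h \<in> Sp1. \<exists>u \<in> SU11. g = qmmult (qscalar h) u"
proof -
  obtain h t q r s where "h \<in> Sp1" "t > 0" and g: "g = qmmult (qscalar h) (QM (of_real t) q r s)"
    using Sp11_unit_scalar_positive_corner[OF assms(1)] .
  then have "QM (of_real t) q r s = qmmult (qscalar (qcnj h)) g"
    by (simp add: qscalar_unit_cancel)
  moreover have "qcnj h \<in> Sp1"
    using \<open>h \<in> Sp1\<close> by (simp add: Sp1_iff qnorm2_qcnj)
  ultimately have "QM (of_real t) q r s \<in> Sp11" "SU11_conj_real_trace (QM (of_real t) q r s)"
    using assms by (simp_all add: Sp11_unit_scalar(1) SU11_conj_real_trace_unit_scalar)
  moreover from this obtain b c d where "QM (of_real t) q r s =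
      QM (of_real t) (quat_of_complex b) (quat_of_complex c) (quat_of_complex d)"
    using Sp11_positive_corner_entries_complex \<open>t > 0\<close> by blast
  ultimately obtain h' u where "h' \<in> Sp1" "u \<in> SU11" "QM (of_real t) q r s = qmmult (qscalar h') u"
    using Sp11_complex_positive_corner_factor \<open>t > 0\<close> by metis
  moreover have "h * h' \<in> Sp1"
    using \<open>h \<in> Sp1\<close> \<open>h' \<in> Sp1\<close> by (simp add: Sp1_iff qnorm2_mult)
  ultimately show ?thesis
    using g by (auto simp: qmmult_qscalar_qscalar)
qed

theorem proposition4p3:
  assumes "g \<in> Sp11"
  shows "(\<forall>u \<in> SU11. quat_is_real (qmtrace (qmmult (qmmult g u) (qminv g))))
         \<longleftrightarrow> (\<exists>h \<in> Sp1. \<exists>u \<in> SU11. g = qmmult (qscalar h) u)"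
proof
  assume "\<forall>u \<in> SU11. quat_is_real (qmtrace (qmmult (qmmult g u) (qminv g)))"
  then show "\<exists>h \<in> Sp1. \<exists>u \<in> SU11. g = qmmult (qscalar h) u"
    using SU11_conj_real_trace_imp_factor[OF assms] by (simp add: SU11_conj_real_trace_def)
next
  assume "\<exists>h \<in> Sp1. \<exists>u \<in> SU11. g = qmmult (qscalar h) u"
  then obtain h u where "h \<in> Sp1" "u \<in> SU11" "g = qmmult (qscalar h) u" by blast
  then have "SU11_conj_real_trace g"
    using SU11_conj_real_trace_unit_scalar SU11_conj_real_trace_SU11 SU11_subset_Sp11 by blast
  then show "\<forall>u \<in> SU11. quat_is_real (qmtrace (qmmult (qmmult g u) (qminv g)))"
    by (simp add: SU11_conj_real_trace_def)
qed

end
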